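(* Let $G$ be a group with subgroups $H,J$ such that $H\neq G$, $|J:H\cap J|=2$, $|H:H\cap J|$ is finite and $H\cap J$ is core-free in $G$, and let $\Gamma=\mathrm{Cos}(G,H,J)$. Let $g\in J\setminus(H\cap J)$ and $L=(H\cap H^g)\langle g\rangle$. Then $J\le L$, $\Gamma$ has constant edge-multiplicity $|L:J|$, and the base graph of $\Gamma$ is isomorphic to $\mathrm{Cos}(G,H,L)$, which is isomorphic to $\mathrm{SimpCos}(G,H,HgH)$. In particular $\Gamma$ is simple if and only if $J=(H\cap H^g)\langle g\rangle$, and in that case $\Gamma\cong\mathrm{SimpCos}(G,H,HgH)$.
   Context: A graph is a triple $(V,E,\mathbf I)$ with $\mathbf I\subseteq V\times E$ such that every edge is incident with exactly two distinct vertices (multiple edges allowed, no loops). It has edge-multiplicity $\lambda$ if every pair of adjacent vertices is incident with exactly $\lambda$ common edges; it is simple if $\lambda=1$. The base graph of a graph with constant edge-multiplicity is the simple graph on the same vertex set whose edges are the unordered pairs of adjacent vertices. Coset graph: for a group $G$ and subgroups $H,J$ with $H\ne G$, $|J:H\cap J|=2$, $|H:H\cap J|$ finite, $\mathrm{Cos}(G,H,J)$ has vertex set $\{Hx:x\in G\}$, edge set $\{Jy:y\in G\}$, and $Hx$ incident with $Jy$ iff $yx^{-1}\in JH$. $\mathrm{SimpCos}(G,H,HgH)$ is the simple graph with vertex set $\{Hx:x\in G\}$ in which $\{Hx,Hy\}$ is an edge iff $yx^{-1}\in HgH$. *)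

theory Defs
  imports "HOL-Algebra.Coset" "HOL-Algebra.Generated_Groups"
begin

text \<open>A (multi)graph is represented as a triple (V, E, I) with I a subset of V x E.\<close>

type_synonym ('v, 'e) inc_graph = "'v set \<times> 'e set \<times> ('v \<times> 'e) set"

definition gverts :: "('v, 'e) inc_graph \<Rightarrow> 'v set" where
  "gverts \<Gamma> = fst \<Gamma>"

definition gedges :: "('v, 'e) inc_graph \<Rightarrow> 'e set" where
  "gedges \<Gamma> = fst (snd \<Gamma>)"

definition ginc :: "('v, 'e) inc_graph \<Rightarrow> ('v \<times> 'e) set" where
  "ginc \<Gamma> = snd (snd \<Gamma>)"

definition gadjacent :: "('v, 'e) inc_graph \<Rightarrow> 'v \<Rightarrow> 'v \<Rightarrow> bool" where
  "gadjacent \<Gamma> u v \<longleftrightarrow> u \<in> gverts \<Gamma> \<and> v \<in> gverts \<Gamma> \<and> u \<noteq> v \<and>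
     (\<exists>e\<in>gedges \<Gamma>. (u, e) \<in> ginc \<Gamma> \<and> (v, e) \<in> ginc \<Gamma>)"

definition edge_multiplicity :: "('v, 'e) inc_graph \<Rightarrow> nat \<Rightarrow> bool" where
  "edge_multiplicity \<Gamma> m \<longleftrightarrow>
     (\<forall>u v. gadjacent \<Gamma> u v \<longrightarrow>
        card {e \<in> gedges \<Gamma>. (u, e) \<in> ginc \<Gamma> \<and> (v, e) \<in> ginc \<Gamma>} = m)"

definition simple_graph :: "('v, 'e) inc_graph \<Rightarrow> bool" where
  "simple_graph \<Gamma> \<longleftrightarrow> edge_multiplicity \<Gamma> 1"

definition base_graph :: "('v, 'e) inc_graph \<Rightarrow> ('v, 'v set) inc_graph" where
  "base_graph \<Gamma> =
     (let E = {{u, v} | u v. gadjacent \<Gamma> u v}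
      in (gverts \<Gamma>, E, {(x, e). x \<in> gverts \<Gamma> \<and> e \<in> E \<and> x \<in> e}))"

definition graph_iso :: "('v, 'e) inc_graph \<Rightarrow> ('w, 'f) inc_graph \<Rightarrow> bool" where
  "graph_iso \<Gamma> \<Delta> \<longleftrightarrow>
     (\<exists>\<phi> \<psi>. bij_betw \<phi> (gverts \<Gamma>) (gverts \<Delta>) \<and> bij_betw \<psi> (gedges \<Gamma>) (gedges \<Delta>) \<and>
        (\<forall>v\<in>gverts \<Gamma>. \<forall>e\<in>gedges \<Gamma>. (v, e) \<in> ginc \<Gamma> \<longleftrightarrow> (\<phi> v, \<psi> e) \<in> ginc \<Delta>))"

definition coset_graph ::
  "('a, 'b) monoid_scheme \<Rightarrow> 'a set \<Rightarrow> 'a set \<Rightarrow> ('a set, 'a set) inc_graph" where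
  "coset_graph G H J =
     (rcosets\<^bsub>G\<^esub> H, rcosets\<^bsub>G\<^esub> J,
      {(A, B). \<exists>x\<in>carrier G. \<exists>y\<in>carrier G.
          A = H #>\<^bsub>G\<^esub> x \<and> B = J #>\<^bsub>G\<^esub> y \<and> y \<otimes>\<^bsub>G\<^esub> inv\<^bsub>G\<^esub> x \<in> J <#>\<^bsub>G\<^esub> H})"

definition simp_coset_graph ::
  "('a, 'b) monoid_scheme \<Rightarrow> 'a set \<Rightarrow> 'a set \<Rightarrow> ('a set, 'a set set) inc_graph" where
  "simp_coset_graph G H D =
     (let E = {{H #>\<^bsub>G\<^esub> x, H #>\<^bsub>G\<^esub> y} | x y.
                 x \<in> carrier G \<and> y \<in> carrier G \<and> y \<otimes>\<^bsub>G\<^esub> inv\<^bsub>G\<^esub> x \<in> D}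
      in (rcosets\<^bsub>G\<^esub> H, E, {(A, e). A \<in> rcosets\<^bsub>G\<^esub> H \<and> e \<in> E \<and> A \<in> e}))"

definition conj_set :: "('a, 'b) monoid_scheme \<Rightarrow> 'a set \<Rightarrow> 'a \<Rightarrow> 'a set" where
  "conj_set G K g = (inv\<^bsub>G\<^esub> g <#\<^bsub>G\<^esub> K) #>\<^bsub>G\<^esub> g"

definition core_free :: "('a, 'b) monoid_scheme \<Rightarrow> 'a set \<Rightarrow> bool" where
  "core_free G K \<longleftrightarrow> (\<Inter>x\<in>carrier G. conj_set G K x) = {\<one>\<^bsub>G\<^esub>}"

text \<open>Index |A : K| for K a subgroup of A (as a natural number; finiteness stated separately).\<close>
definition sindex :: "('a, 'b) monoid_scheme \<Rightarrow> 'a set \<Rightarrow> 'a set \<Rightarrow> nat" where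
  "sindex G A K = card (rcosets\<^bsub>G\<lparr>carrier := A\<rparr>\<^esub> K)"

end

theory Submission
  imports Defs
begin

text \<open>Write \<open>K = H \<inter> J\<close>. As \<open>|J : K| = 2\<close> and \<open>g \<in> J - K\<close>, every element of \<open>J\<close> lies in \<open>K\<close>
  or in \<open>Kg\<close>; hence \<open>g\<^sup>2 \<in> H\<close> and \<open>g\<close> normalises \<open>K\<close>. In a coset graph \<open>Cos(G,H,M)\<close> with
  \<open>g \<in> M\<close> the edge \<open>My\<close> is incident with exactly the two vertices \<open>Hy\<close> and \<open>Hgy\<close>, and the map
  \<open>y \<mapsto> {Hy, Hgy}\<close> has as fibres the right cosets of the setwise stabiliser \<open>L\<close> of \<open>{H, Hg}\<close>.
  An element of \<open>L\<close> either fixes \<open>H\<close> and \<open>Hg\<close> or swaps them, which gives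
  \<open>L = (H \<inter> H\<^sup>g)\<langle>g\<rangle>\<close>, and \<open>J \<le> L\<close> because \<open>g\<close> normalises \<open>K\<close>. So for \<open>M = J\<close> the edges
  joining \<open>Hy\<close> and \<open>Hgy\<close> are the cosets of \<open>J\<close> inside \<open>Ly\<close>, there are \<open>|L : J|\<close> of them, and
  collapsing them yields the graph with edge set \<open>{{Hy, Hgy}}\<close>. For \<open>M = L\<close> no collapsing
  happens, and the same edge set is that of \<open>SimpCos(G,H,HgH)\<close>, since \<open>yx\<^sup>-\<^sup>1 \<in> HgH\<close> says exactly
  that \<open>{Hx, Hy} = {Hz, Hgz}\<close> for some \<open>z\<close>.\<close>

definition membership_graph :: "'v set \<Rightarrow> 'v set set \<Rightarrow> ('v, 'v set) inc_graph" where
  "membership_graph V E = (V, E, {(x, e). x \<in> V \<and> e \<in> E \<and> x \<in> e})"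

definition incident_vertices :: "('v, 'e) inc_graph \<Rightarrow> 'e \<Rightarrow> 'v set" where
  "incident_vertices \<Gamma> e = {v \<in> gverts \<Gamma>. (v, e) \<in> ginc \<Gamma>}"

lemma base_graph_eq_membership_graph:
  "base_graph \<Gamma> = membership_graph (gverts \<Gamma>) {{u, v} | u v. gadjacent \<Gamma> u v}"
  unfolding base_graph_def membership_graph_def Let_def ..

lemma graph_iso_membership_graph:
  assumes "inj_on (incident_vertices \<Gamma>) (gedges \<Gamma>)"
  shows "graph_iso \<Gamma> (membership_graph (gverts \<Gamma>) (incident_vertices \<Gamma> ` gedges \<Gamma>))"
  unfolding graph_iso_def
proof (intro exI conjI)
  show "bij_betw id (gverts \<Gamma>) (gverts (membership_graph (gverts \<Gamma>) (incident_vertices \<Gamma> ` gedges \<Gamma>)))"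
    by (simp add: membership_graph_def gverts_def)
  show "bij_betw (incident_vertices \<Gamma>) (gedges \<Gamma>)
      (gedges (membership_graph (gverts \<Gamma>) (incident_vertices \<Gamma> ` gedges \<Gamma>)))"
    using inj_on_imp_bij_betw[OF assms] by (simp add: membership_graph_def gedges_def)
  show "\<forall>v\<in>gverts \<Gamma>. \<forall>e\<in>gedges \<Gamma>. (v, e) \<in> ginc \<Gamma> \<longleftrightarrow>
      (id v, incident_vertices \<Gamma> e) \<in> ginc (membership_graph (gverts \<Gamma>) (incident_vertices \<Gamma> ` gedges \<Gamma>))"
    by (simp add: membership_graph_def ginc_def incident_vertices_def)
qed

lemma graph_iso_sym:
  assumes "graph_iso \<Gamma> \<Delta>"
  shows "graph_iso \<Delta> \<Gamma>"
proof -
  obtain \<phi> \<psi> where \<phi>: "bij_betw \<phi> (gverts \<Gamma>) (gverts \<Delta>)" and \<psi>: "bij_betw \<psi> (gedges \<Gamma>) (gedges \<Delta>)"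
    and inc: "\<forall>v\<in>gverts \<Gamma>. \<forall>e\<in>gedges \<Gamma>. (v, e) \<in> ginc \<Gamma> \<longleftrightarrow> (\<phi> v, \<psi> e) \<in> ginc \<Delta>"
    using assms unfolding graph_iso_def by blast
  let ?\<phi>' = "inv_into (gverts \<Gamma>) \<phi>" and ?\<psi>' = "inv_into (gedges \<Gamma>) \<psi>"
  have "\<forall>v\<in>gverts \<Delta>. \<forall>e\<in>gedges \<Delta>. (v, e) \<in> ginc \<Delta> \<longleftrightarrow> (?\<phi>' v, ?\<psi>' e) \<in> ginc \<Gamma>"
  proof (intro ballI)
    fix v e assume "v \<in> gverts \<Delta>" "e \<in> gedges \<Delta>"
    then have "?\<phi>' v \<in> gverts \<Gamma>" "\<phi> (?\<phi>' v) = v" "?\<psi>' e \<in> gedges \<Gamma>" "\<psi> (?\<psi>' e) = e"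
      using \<phi> \<psi> by (auto simp: bij_betw_def inv_into_into f_inv_into_f)
    then show "(v, e) \<in> ginc \<Delta> \<longleftrightarrow> (?\<phi>' v, ?\<psi>' e) \<in> ginc \<Gamma>"
      using inc by metis
  qed
  then show ?thesis
    unfolding graph_iso_def using bij_betw_inv_into[OF \<phi>] bij_betw_inv_into[OF \<psi>] by blast
qed

lemma (in group) m_inv_cancel_left [simp]:
  "x \<in> carrier G \<Longrightarrow> y \<in> carrier G \<Longrightarrow> x \<otimes> (inv x \<otimes> y) = y"
  by (simp add: m_assoc[symmetric])

lemma (in group) inv_m_cancel_left [simp]:
  "x \<in> carrier G \<Longrightarrow> y \<in> carrier G \<Longrightarrow> inv x \<otimes> (x \<otimes> y) = y"
  by (simp add: m_assoc[symmetric])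

lemma rcosets_restricted_carrier:
  "rcosets\<^bsub>G\<lparr>carrier := X\<rparr>\<^esub> K = {K #>\<^bsub>G\<^esub> z | z. z \<in> X}"
  unfolding RCOSETS_def r_coset_def by auto

lemma (in group) rcos_eq_iff:
  assumes "subgroup M G" "x \<in> carrier G" "y \<in> carrier G"
  shows "M #> x = M #> y \<longleftrightarrow> x \<otimes> inv y \<in> M"
  using repr_independence[OF _ assms(3,1)] rcos_self[OF assms(2,1)]
    subgroup.rcos_module[OF assms(1) is_group assms(3,2)] by metis

lemma (in group) set_mult_mem_iff_rcos_eq:
  assumes M: "subgroup M G" and H: "subgroup H G" and x: "x \<in> carrier G" and y: "y \<in> carrier G"
  shows "y \<otimes> inv x \<in> M <#> H \<longleftrightarrow> (\<exists>m\<in>M. H #> x = H #> (m \<otimes> y))"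
proof
  assume "y \<otimes> inv x \<in> M <#> H"
  then obtain m h where mh: "m \<in> M" "h \<in> H" "y \<otimes> inv x = m \<otimes> h"
    unfolding set_mult_def by auto
  have mc: "m \<in> carrier G" and hc: "h \<in> carrier G"
    using mh subgroup.mem_carrier[OF M] subgroup.mem_carrier[OF H] by auto
  have "x \<otimes> inv (inv m \<otimes> y) = inv (y \<otimes> inv x) \<otimes> m"
    using x y mc by (simp add: inv_mult_group m_assoc)
  also have "\<dots> = inv h"
    using mh(3) mc hc by (simp add: inv_mult_group m_assoc)
  finally have "H #> x = H #> (inv m \<otimes> y)"
    using rcos_eq_iff[OF H x] subgroup.m_inv_closed[OF H mh(2)] mc y by simp
  then show "\<exists>m\<in>M. H #> x = H #> (m \<otimes> y)"
    using subgroup.m_inv_closed[OF M mh(1)] by blast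
next
  assume "\<exists>m\<in>M. H #> x = H #> (m \<otimes> y)"
  then obtain m where m: "m \<in> M" "H #> x = H #> (m \<otimes> y)" by blast
  have mc: "m \<in> carrier G" using m subgroup.mem_carrier[OF M] by auto
  have h: "x \<otimes> inv (m \<otimes> y) \<in> H"
    using m(2) rcos_eq_iff[OF H x] mc y by simp
  have "y \<otimes> inv x = inv m \<otimes> inv (x \<otimes> inv (m \<otimes> y))"
    using x y mc by (simp add: inv_mult_group m_assoc)
  then show "y \<otimes> inv x \<in> M <#> H"
    using subgroup.m_inv_closed[OF M m(1)] subgroup.m_inv_closed[OF H h]
    unfolding set_mult_def by blast
qed

lemma (in group) card_rcosets_restricted_eq_1_iff:
  assumes "subgroup M G" "subgroup S G" "M \<subseteq> S"
  shows "card (rcosets\<^bsub>G\<lparr>carrier := S\<rparr>\<^esub> M) = 1 \<longleftrightarrow> M = S"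
proof
  assume "card (rcosets\<^bsub>G\<lparr>carrier := S\<rparr>\<^esub> M) = 1"
  then obtain X where X: "{M #> z | z. z \<in> S} = {X}"
    by (auto simp: rcosets_restricted_carrier card_1_singleton_iff)
  have "M #> \<one> \<in> {M #> z | z. z \<in> S}"
    using subgroup.one_closed[OF assms(2)] by blast
  then have "X = M" using X subgroup.subset[OF assms(1)] by simp
  have "z \<in> M" if "z \<in> S" for z
  proof -
    have "M #> z = M" using X \<open>X = M\<close> that by blast
    then show ?thesis using coset_join1 subgroup.mem_carrier[OF assms(2) that] assms(1) by blast
  qed
  then show "M = S" using assms(3) by blast
next
  assume "M = S"
  then have "{M #> z | z. z \<in> S} = {M}"
    using subgroup.rcos_const[OF assms(1) is_group] subgroup.one_closed[OF assms(1)] by auto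
  then show "card (rcosets\<^bsub>G\<lparr>carrier := S\<rparr>\<^esub> M) = 1"
    by (simp add: rcosets_restricted_carrier)
qed

lemma (in group) index_two_rcos_mem:
  assumes K: "subgroup K G" and J: "subgroup J G" and "K \<subseteq> J"
    and two: "card (rcosets\<^bsub>G\<lparr>carrier := J\<rparr>\<^esub> K) = 2"
    and g: "g \<in> J" "g \<notin> K" and x: "x \<in> J" "x \<notin> K"
  shows "x \<otimes> inv g \<in> K"
proof -
  have gc: "g \<in> carrier G" and xc: "x \<in> carrier G" using g x subgroup.subset[OF J] by auto
  let ?S = "{K #> z | z. z \<in> J}"
  have "K #> \<one> \<in> ?S" "K #> g \<in> ?S" "K #> x \<in> ?S"
    using subgroup.one_closed[OF J] g x by blast+
  moreover have "K #> \<one> \<noteq> K #> g" "K #> x \<noteq> K #> \<one>"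
    using rcos_eq_iff[OF K one_closed gc] rcos_eq_iff[OF K xc one_closed] g x gc xc
      subgroup.m_inv_closed[OF K] by force+
  moreover obtain a b where "?S = {a, b}"
    using two by (auto simp: rcosets_restricted_carrier card_2_iff)
  ultimately have "K #> x = K #> g" by auto
  then show ?thesis using rcos_eq_iff[OF K xc gc] by simp
qed

lemma (in group) index_two_square_mem:
  assumes K: "subgroup K G" and J: "subgroup J G" and "K \<subseteq> J"
    and two: "card (rcosets\<^bsub>G\<lparr>carrier := J\<rparr>\<^esub> K) = 2"
    and g: "g \<in> J" "g \<notin> K"
  shows "g \<otimes> g \<in> K"
proof -
  have gc: "g \<in> carrier G" using g subgroup.mem_carrier[OF J] by auto
  have "inv g \<notin> K" using g gc subgroup.m_inv_closed[OF K] by fastforce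
  then have "inv g \<otimes> inv g \<in> K"
    using index_two_rcos_mem[OF assms(1-4) g subgroup.m_inv_closed[OF J g(1)]] by simp
  then have "inv (inv g \<otimes> inv g) \<in> K" using subgroup.m_inv_closed[OF K] by blast
  then show ?thesis using gc by (simp add: inv_mult_group)
qed

lemma (in group) conj_set_mem_iff:
  assumes "K \<subseteq> carrier G" "g \<in> carrier G" "x \<in> carrier G"
  shows "x \<in> conj_set G K g \<longleftrightarrow> g \<otimes> x \<otimes> inv g \<in> K"
proof
  assume "x \<in> conj_set G K g"
  then obtain k where k: "k \<in> K" "x = inv g \<otimes> k \<otimes> g"
    unfolding conj_set_def l_coset_def r_coset_def by auto
  then have "g \<otimes> x \<otimes> inv g = k"
    using assms subsetD[OF assms(1) k(1)] by (simp add: m_assoc)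
  then show "g \<otimes> x \<otimes> inv g \<in> K" using k by simp
next
  assume "g \<otimes> x \<otimes> inv g \<in> K"
  moreover have "x = inv g \<otimes> (g \<otimes> x \<otimes> inv g) \<otimes> g"
    using assms by (simp add: m_assoc)
  ultimately show "x \<in> conj_set G K g"
    unfolding conj_set_def l_coset_def r_coset_def by blast
qed

text \<open>\<open>ends y = {Hy, Hgy}\<close> is the set of endpoints of the edge \<open>My\<close> of \<open>Cos(G,H,M)\<close> whenever
  \<open>g \<in> M \<le> stab\<close>; \<open>stab\<close>, the setwise stabiliser of \<open>{H, Hg}\<close>, is the group \<open>L\<close> of the theorem.\<close>

locale coset_edge = group G for G (structure) +
  fixes H :: "'a set" and g :: 'a
  assumes H: "subgroup H G" and g_carrier: "g \<in> carrier G" and g_notin: "g \<notin> H"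
    and g_square: "g \<otimes> g \<in> H"
begin

definition ends :: "'a \<Rightarrow> 'a set set" where
  "ends y = {H #> y, H #> (g \<otimes> y)}"

definition stab :: "'a set" where
  "stab = {z \<in> carrier G. ends z = ends \<one>}"

definition end_pairs :: "'a set set set" where
  "end_pairs = ends ` carrier G"

lemma H_carrier: "H \<subseteq> carrier G"
  using subgroup.subset[OF H] .

lemma ends_one: "ends \<one> = {H, H #> g}"
  unfolding ends_def using H_carrier g_carrier by simp

lemma ends_mult:
  assumes "a \<in> carrier G" "b \<in> carrier G"
  shows "ends (a \<otimes> b) = (\<lambda>A. A #> b) ` ends a"
  unfolding ends_def using assms g_carrier H_carrier by (simp add: coset_mult_assoc m_assoc)

lemma ends_distinct:
  assumes y: "y \<in> carrier G"
  shows "H #> y \<noteq> H #> (g \<otimes> y)"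
proof
  assume "H #> y = H #> (g \<otimes> y)"
  then have "inv (y \<otimes> inv (g \<otimes> y)) \<in> H"
    using rcos_eq_iff[OF H y m_closed[OF g_carrier y]] subgroup.m_inv_closed[OF H] by simp
  moreover have "inv (y \<otimes> inv (g \<otimes> y)) = g"
    using y g_carrier by (simp add: inv_mult_group m_assoc)
  ultimately show False using g_notin by simp
qed

lemma ends_subset_rcosets: "y \<in> carrier G \<Longrightarrow> ends y \<subseteq> rcosets H"
  unfolding ends_def using rcosetsI[OF H_carrier] g_carrier by simp

lemma stab_subgroup: "subgroup stab G"
proof (rule subgroupI)
  show "stab \<subseteq> carrier G" "stab \<noteq> {}" unfolding stab_def by auto
next
  fix a b assume "a \<in> stab" "b \<in> stab"
  then show "inv a \<in> stab" "a \<otimes> b \<in> stab"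
    unfolding stab_def using ends_mult[of a "inv a"] ends_mult[of \<one> "inv a"] ends_mult[of a b] ends_mult[of \<one> b]
    by (auto simp del: ends_def)
qed

lemma ends_eq_iff:
  assumes "y \<in> carrier G" "y' \<in> carrier G"
  shows "ends y' = ends y \<longleftrightarrow> y' \<otimes> inv y \<in> stab"
  using assms ends_mult[of y' "inv y"] ends_mult[of y "inv y"]
    ends_mult[of "y' \<otimes> inv y" y] ends_mult[of \<one> y]
  by (auto simp: stab_def m_assoc simp del: ends_def)

lemma g_in_stab: "g \<in> stab"
  using coset_join2[OF m_closed[OF g_carrier g_carrier] H g_square] g_carrier
  unfolding stab_def ends_one by (auto simp: ends_def)

lemma H_inter_stab: "H \<inter> stab = H \<inter> conj_set G H g"
proof -
  have "x \<in> stab \<longleftrightarrow> g \<otimes> x \<otimes> inv g \<in> H" if x: "x \<in> H" for x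
  proof -
    have xc: "x \<in> carrier G" using x H_carrier by auto
    have "ends x = {H, H #> (g \<otimes> x)}"
      unfolding ends_def using coset_join2[OF xc H x] by simp
    moreover have "H \<noteq> H #> (g \<otimes> x)" "H \<noteq> H #> g"
      using ends_distinct[OF xc] ends_distinct[OF one_closed] coset_join2[OF xc H x] g_carrier H_carrier
      by auto
    ultimately have "x \<in> stab \<longleftrightarrow> H #> (g \<otimes> x) = H #> g"
      unfolding stab_def ends_one using xc by (auto simp: doubleton_eq_iff)
    then show ?thesis
      using rcos_eq_iff[OF H m_closed[OF g_carrier xc] g_carrier] by simp
  qed
  then show ?thesis
    using conj_set_mem_iff[OF H_carrier g_carrier] H_carrier by blast
qed

lemma stab_mem_cases:
  assumes "z \<in> stab"
  shows "z \<in> H \<or> z \<otimes> inv g \<in> H"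
proof -
  have zc: "z \<in> carrier G" using assms by (simp add: stab_def)
  have "H #> z \<in> ends \<one>" using assms by (auto simp: stab_def ends_def)
  then have "H #> z = H #> \<one> \<or> H #> z = H #> g"
    using ends_one H_carrier by auto
  then show ?thesis
    using rcos_eq_iff[OF H zc one_closed] rcos_eq_iff[OF H zc g_carrier] zc by auto
qed

lemma stab_eq: "stab = (H \<inter> conj_set G H g) <#> generate G {g}"
proof
  have "generate G {g} \<subseteq> stab"
    by (rule generate_subgroup_incl) (simp_all add: g_in_stab stab_subgroup)
  then show "(H \<inter> conj_set G H g) <#> generate G {g} \<subseteq> stab"
    using H_inter_stab subgroup.m_closed[OF stab_subgroup] unfolding set_mult_def by blast
next
  show "stab \<subseteq> (H \<inter> conj_set G H g) <#> generate G {g}"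
  proof
    fix z assume z: "z \<in> stab"
    have zc: "z \<in> carrier G" using z by (simp add: stab_def)
    have gen: "\<one> \<in> generate G {g}" "g \<in> generate G {g}"
      by (auto intro: generate.one generate.incl)
    have "z \<otimes> inv g \<in> stab"
      using z g_in_stab stab_subgroup by (simp add: subgroup.m_closed subgroup.m_inv_closed)
    then show "z \<in> (H \<inter> conj_set G H g) <#> generate G {g}"
      using stab_mem_cases[OF z] H_inter_stab z gen zc g_carrier
      unfolding set_mult_def
      by (metis (no_types, lifting) IntI UN_iff insert_iff inv_solve_right r_one inv_closed m_closed)
  qed
qed

end

locale coset_edge_subgroup = coset_edge +
  fixes M :: "'a set"
  assumes M: "subgroup M G" and g_in_M: "g \<in> M" and M_subset_stab: "M \<subseteq> stab"
begin

lemma rcos_in_ends_iff: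
  assumes x: "x \<in> carrier G" and y: "y \<in> carrier G"
  shows "H #> x \<in> ends y \<longleftrightarrow> y \<otimes> inv x \<in> M <#> H"
proof -
  have "H #> x \<in> ends y \<longleftrightarrow> (\<exists>m\<in>M. H #> x = H #> (m \<otimes> y))"
  proof
    assume "H #> x \<in> ends y"
    then have "H #> x = H #> (\<one> \<otimes> y) \<or> H #> x = H #> (g \<otimes> y)"
      using y by (auto simp: ends_def)
    then show "\<exists>m\<in>M. H #> x = H #> (m \<otimes> y)"
      using subgroup.one_closed[OF M] g_in_M by blast
  next
    assume "\<exists>m\<in>M. H #> x = H #> (m \<otimes> y)"
    then obtain m where m: "m \<in> M" "H #> x = H #> (m \<otimes> y)" by blast
    have mc: "m \<in> carrier G" using m subgroup.mem_carrier[OF M] by auto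
    have "ends (m \<otimes> y) = ends y"
      using ends_eq_iff[OF y m_closed[OF mc y]] m(1) M_subset_stab mc y by (auto simp: m_assoc)
    then show "H #> x \<in> ends y"
      using m(2) by (auto simp: ends_def)
  qed
  then show ?thesis using set_mult_mem_iff_rcos_eq[OF M H x y] by simp
qed

lemma ends_eq_of_rcos_eq:
  assumes "y \<in> carrier G" "y' \<in> carrier G" "M #> y = M #> y'"
  shows "ends y = ends y'"
  using assms rcos_eq_iff[OF M] ends_eq_iff M_subset_stab by blast

lemma coset_graph_inc_iff:
  assumes y: "y \<in> carrier G"
  shows "(A, M #> y) \<in> ginc (coset_graph G H M) \<longleftrightarrow> A \<in> ends y"
proof
  assume "(A, M #> y) \<in> ginc (coset_graph G H M)"
  then obtain x y' where "x \<in> carrier G" "y' \<in> carrier G" "A = H #> x" "M #> y = M #> y'"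
      "y' \<otimes> inv x \<in> M <#> H"
    unfolding ginc_def coset_graph_def by auto
  then show "A \<in> ends y"
    using rcos_in_ends_iff ends_eq_of_rcos_eq[OF y] by metis
next
  assume A: "A \<in> ends y"
  then obtain x where "x \<in> carrier G" "A = H #> x"
    using y g_carrier by (auto simp: ends_def)
  then show "(A, M #> y) \<in> ginc (coset_graph G H M)"
    using rcos_in_ends_iff[of x y] A y unfolding ginc_def coset_graph_def by auto
qed

lemma incident_vertices_coset_graph:
  "y \<in> carrier G \<Longrightarrow> incident_vertices (coset_graph G H M) (M #> y) = ends y"
  using coset_graph_inc_iff ends_subset_rcosets
  by (auto simp: incident_vertices_def gverts_def coset_graph_def)

lemma coset_graph_common_edge_iff:
  assumes "y \<in> carrier G" "u \<noteq> v"
  shows "(u, M #> y) \<in> ginc (coset_graph G H M) \<and> (v, M #> y) \<in> ginc (coset_graph G H M)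
    \<longleftrightarrow> ends y = {u, v}"
  using assms coset_graph_inc_iff by (auto simp: ends_def)

lemma coset_graph_gverts: "gverts (coset_graph G H M) = rcosets H"
  by (simp add: gverts_def coset_graph_def)

lemma coset_graph_gedges: "gedges (coset_graph G H M) = {M #> y | y. y \<in> carrier G}"
  by (auto simp: gedges_def coset_graph_def RCOSETS_def)

lemma coset_graph_adjacent_iff:
  "gadjacent (coset_graph G H M) u v \<longleftrightarrow> u \<noteq> v \<and> {u, v} \<in> end_pairs"
proof
  assume adj: "gadjacent (coset_graph G H M) u v"
  then obtain y where y: "y \<in> carrier G" "(u, M #> y) \<in> ginc (coset_graph G H M)"
      "(v, M #> y) \<in> ginc (coset_graph G H M)"
    unfolding gadjacent_def coset_graph_gedges by blast
  have "u \<noteq> v" using adj by (simp add: gadjacent_def)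
  then have "ends y = {u, v}" using coset_graph_common_edge_iff[OF y(1)] y(2,3) by blast
  then show "u \<noteq> v \<and> {u, v} \<in> end_pairs"
    using \<open>u \<noteq> v\<close> y(1) unfolding end_pairs_def by blast
next
  assume uv: "u \<noteq> v \<and> {u, v} \<in> end_pairs"
  then obtain y where y: "y \<in> carrier G" "ends y = {u, v}" by (auto simp: end_pairs_def)
  then have "u \<in> gverts (coset_graph G H M)" "v \<in> gverts (coset_graph G H M)"
    using ends_subset_rcosets[OF y(1)] unfolding y(2) by (auto simp: gverts_def coset_graph_def)
  then show "gadjacent (coset_graph G H M) u v"
    using coset_graph_common_edge_iff[OF y(1)] uv y unfolding gadjacent_def coset_graph_gedges by blast
qed

lemma coset_graph_common_edges:
  assumes y0: "y0 \<in> carrier G" and uv: "u \<noteq> v" "ends y0 = {u, v}"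
  shows "{e \<in> gedges (coset_graph G H M). (u, e) \<in> ginc (coset_graph G H M) \<and> (v, e) \<in> ginc (coset_graph G H M)}
    = (\<lambda>B. B #> y0) ` (rcosets\<^bsub>G\<lparr>carrier := stab\<rparr>\<^esub> M)"
    (is "?C = _")
proof -
  have MG: "M \<subseteq> carrier G" using subgroup.subset[OF M] .
  have "?C = {M #> y | y. y \<in> carrier G \<and> ends y = ends y0}"
    unfolding coset_graph_gedges uv(2) using coset_graph_common_edge_iff[OF _ uv(1)] by blast
  also have "\<dots> = {M #> (z \<otimes> y0) | z. z \<in> stab}"
  proof (intro equalityI subsetI)
    fix e assume "e \<in> {M #> y | y. y \<in> carrier G \<and> ends y = ends y0}"
    then obtain y where y: "y \<in> carrier G" "ends y = ends y0" "e = M #> y" by blast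
    then have "y \<otimes> inv y0 \<in> stab" "e = M #> ((y \<otimes> inv y0) \<otimes> y0)"
      using ends_eq_iff[OF y0 y(1)] y0 by (simp_all add: m_assoc)
    then show "e \<in> {M #> (z \<otimes> y0) | z. z \<in> stab}" by blast
  next
    fix e assume "e \<in> {M #> (z \<otimes> y0) | z. z \<in> stab}"
    then obtain z where z: "z \<in> stab" "e = M #> (z \<otimes> y0)" by blast
    then have zc: "z \<in> carrier G" by (simp add: stab_def)
    then have "ends (z \<otimes> y0) = ends y0"
      using ends_eq_iff[OF y0 m_closed[OF zc y0]] z y0 by (simp add: m_assoc)
    then show "e \<in> {M #> y | y. y \<in> carrier G \<and> ends y = ends y0}"
      using z zc y0 by blast
  qed
  also have "\<dots> = (\<lambda>B. B #> y0) ` (rcosets\<^bsub>G\<lparr>carrier := stab\<rparr>\<^esub> M)"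
    unfolding rcosets_restricted_carrier
    using coset_mult_assoc[OF MG _ y0] subgroup.mem_carrier[OF stab_subgroup] by blast
  finally show ?thesis .
qed

lemma coset_graph_edge_multiplicity:
  "edge_multiplicity (coset_graph G H M) (sindex G stab M)"
  unfolding edge_multiplicity_def
proof (intro allI impI)
  fix u v assume "gadjacent (coset_graph G H M) u v"
  then obtain y0 where y0: "y0 \<in> carrier G" "u \<noteq> v" "ends y0 = {u, v}"
    unfolding coset_graph_adjacent_iff end_pairs_def by (metis imageE)
  have "inj_on (\<lambda>B. B #> y0) (rcosets\<^bsub>G\<lparr>carrier := stab\<rparr>\<^esub> M)"
  proof (rule inj_on_inverseI)
    fix B assume "B \<in> rcosets\<^bsub>G\<lparr>carrier := stab\<rparr>\<^esub> M"
    then have "B \<subseteq> carrier G"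
      using r_coset_subset_G[OF subgroup.subset[OF M]] subgroup.mem_carrier[OF stab_subgroup]
      by (auto simp: rcosets_restricted_carrier)
    then show "(B #> y0) #> inv y0 = B"
      using y0 by (simp add: coset_mult_assoc)
  qed
  then show "card {e \<in> gedges (coset_graph G H M).
      (u, e) \<in> ginc (coset_graph G H M) \<and> (v, e) \<in> ginc (coset_graph G H M)} = sindex G stab M"
    using coset_graph_common_edges[OF y0] by (simp add: card_image sindex_def)
qed

lemma simple_coset_graph_iff: "simple_graph (coset_graph G H M) \<longleftrightarrow> M = stab"
proof -
  have "H \<noteq> H #> g"
    using ends_distinct[OF one_closed] g_carrier H_carrier by simp
  moreover have "{H, H #> g} \<in> end_pairs"
    using ends_one one_closed unfolding end_pairs_def by (metis image_eqI)
  ultimately have "gadjacent (coset_graph G H M) H (H #> g)"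
    using coset_graph_adjacent_iff by blast
  then have "edge_multiplicity (coset_graph G H M) 1 \<longleftrightarrow> sindex G stab M = 1"
    using coset_graph_edge_multiplicity unfolding edge_multiplicity_def by (metis (no_types, lifting))
  then show ?thesis
    using card_rcosets_restricted_eq_1_iff[OF M stab_subgroup M_subset_stab]
    by (simp add: simple_graph_def sindex_def)
qed

lemma base_graph_coset_graph:
  "base_graph (coset_graph G H M) = membership_graph (rcosets H) end_pairs"
proof -
  have "{{u, v} | u v. gadjacent (coset_graph G H M) u v} = end_pairs"
  proof (intro equalityI subsetI)
    fix E assume "E \<in> {{u, v} | u v. gadjacent (coset_graph G H M) u v}"
    then show "E \<in> end_pairs" using coset_graph_adjacent_iff by blast
  next
    fix E assume E: "E \<in> end_pairs"
    then obtain y where y: "y \<in> carrier G" "E = {H #> y, H #> (g \<otimes> y)}"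
      by (auto simp: end_pairs_def ends_def)
    have "gadjacent (coset_graph G H M) (H #> y) (H #> (g \<otimes> y))"
      unfolding coset_graph_adjacent_iff using ends_distinct[OF y(1)] E y(2) by simp
    then show "E \<in> {{u, v} | u v. gadjacent (coset_graph G H M) u v}"
      using y(2) by blast
  qed
  then show ?thesis
    unfolding base_graph_eq_membership_graph coset_graph_gverts by simp
qed

end

context coset_edge
begin

lemma subset_stab_of_index_two:
  assumes J: "subgroup J G" and gJ: "g \<in> J" and two: "sindex G J (H \<inter> J) = 2"
  shows "J \<subseteq> stab"
proof -
  have K: "subgroup (H \<inter> J) G" using subgroups_Inter_pair[OF H J] .
  have gK: "g \<notin> H \<inter> J" using g_notin by simp
  note index_two = index_two_rcos_mem[OF K J Int_lower2 two[unfolded sindex_def] gJ gK]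
  have K_stab: "H \<inter> J \<subseteq> stab"
  proof
    fix k assume k: "k \<in> H \<inter> J"
    have kc: "k \<in> carrier G" using k H_carrier by auto
    have "g \<otimes> k \<notin> H"
      using k g_notin subgroup.m_closed[OF H _ subgroup.m_inv_closed[OF H]] g_carrier kc
      by (metis IntD1 m_assoc r_inv r_one inv_closed)
    then have "g \<otimes> k \<otimes> inv g \<in> H"
      using index_two subgroup.m_closed[OF J gJ] k by blast
    then show "k \<in> stab"
      using H_inter_stab conj_set_mem_iff[OF H_carrier g_carrier kc] k by blast
  qed
  show ?thesis
  proof
    fix x assume x: "x \<in> J"
    have xc: "x \<in> carrier G" using x subgroup.mem_carrier[OF J] by auto
    show "x \<in> stab"
    proof (cases "x \<in> H")
      case True
      then show ?thesis using x K_stab by blast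
    next
      case False
      then have "x \<otimes> inv g \<otimes> g \<in> stab"
        using index_two x K_stab subgroup.m_closed[OF stab_subgroup _ g_in_stab] by blast
      then show ?thesis using xc g_carrier by (simp add: m_assoc)
    qed
  qed
qed

lemma set_mult_double_coset_mem_iff:
  assumes x: "x \<in> carrier G" and y: "y \<in> carrier G"
  shows "y \<otimes> inv x \<in> (H #> g) <#> H \<longleftrightarrow> (\<exists>z\<in>carrier G. H #> x = H #> z \<and> H #> y = H #> (g \<otimes> z))"
proof
  assume "y \<otimes> inv x \<in> (H #> g) <#> H"
  then obtain h1 h2 where h: "h1 \<in> H" "h2 \<in> H" "y \<otimes> inv x = h1 \<otimes> g \<otimes> h2"
    unfolding set_mult_def r_coset_def by auto
  have hc: "h1 \<in> carrier G" "h2 \<in> carrier G" using h H_carrier by auto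
  have "x \<otimes> inv (h2 \<otimes> x) = inv h2"
    using x hc by (simp add: inv_mult_group m_assoc)
  moreover have "y = (y \<otimes> inv x) \<otimes> x" using x y by (simp add: m_assoc)
  then have "y \<otimes> inv (g \<otimes> (h2 \<otimes> x)) = h1"
    unfolding h(3) using x hc g_carrier by (simp add: inv_mult_group m_assoc)
  ultimately show "\<exists>z\<in>carrier G. H #> x = H #> z \<and> H #> y = H #> (g \<otimes> z)"
    using rcos_eq_iff[OF H] subgroup.m_inv_closed[OF H h(2)] h(1) x y hc g_carrier
    by (metis m_closed)
next
  assume "\<exists>z\<in>carrier G. H #> x = H #> z \<and> H #> y = H #> (g \<otimes> z)"
  then obtain z where z: "z \<in> carrier G" "x \<otimes> inv z \<in> H" "y \<otimes> inv (g \<otimes> z) \<in> H"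
    using rcos_eq_iff[OF H] x y g_carrier by (metis m_closed)
  have "y \<otimes> inv x = (y \<otimes> inv (g \<otimes> z)) \<otimes> g \<otimes> inv (x \<otimes> inv z)"
    using x y z g_carrier by (simp add: inv_mult_group m_assoc)
  then show "y \<otimes> inv x \<in> (H #> g) <#> H"
    using z subgroup.m_inv_closed[OF H] unfolding set_mult_def r_coset_def by blast
qed

lemma simp_coset_graph_eq:
  "simp_coset_graph G H ((H #> g) <#> H) = membership_graph (rcosets H) end_pairs"
proof -
  have "{{H #> x, H #> y} | x y. x \<in> carrier G \<and> y \<in> carrier G \<and> y \<otimes> inv x \<in> (H #> g) <#> H}
      = end_pairs"
  proof (intro equalityI subsetI)
    fix E assume "E \<in> {{H #> x, H #> y} | x y.
        x \<in> carrier G \<and> y \<in> carrier G \<and> y \<otimes> inv x \<in> (H #> g) <#> H}"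
    then show "E \<in> end_pairs"
      using set_mult_double_coset_mem_iff unfolding end_pairs_def ends_def by fastforce
  next
    fix E assume "E \<in> end_pairs"
    then obtain z where z: "z \<in> carrier G" "E = {H #> z, H #> (g \<otimes> z)}"
      unfolding end_pairs_def ends_def by blast
    then have "(g \<otimes> z) \<otimes> inv z \<in> (H #> g) <#> H"
      using set_mult_double_coset_mem_iff g_carrier by blast
    then show "E \<in> {{H #> x, H #> y} | x y.
        x \<in> carrier G \<and> y \<in> carrier G \<and> y \<otimes> inv x \<in> (H #> g) <#> H}"
      using z g_carrier by blast
  qed
  then show ?thesis unfolding simp_coset_graph_def membership_graph_def Let_def by simp
qed

lemma coset_graph_stab_iso:
  "graph_iso (coset_graph G H stab) (membership_graph (rcosets H) end_pairs)"
proof -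
  interpret S: coset_edge_subgroup G H g stab
    by (intro coset_edge_subgroup.intro coset_edge_subgroup_axioms.intro coset_edge.intro
        coset_edge_axioms.intro is_group H g_carrier g_notin g_square stab_subgroup g_in_stab subset_refl)
  have "inj_on (incident_vertices (coset_graph G H stab)) (gedges (coset_graph G H stab))"
  proof (rule inj_onI)
    fix A B assume "A \<in> gedges (coset_graph G H stab)" "B \<in> gedges (coset_graph G H stab)"
      and eq: "incident_vertices (coset_graph G H stab) A = incident_vertices (coset_graph G H stab) B"
    then obtain a b where ab: "a \<in> carrier G" "A = stab #> a" "b \<in> carrier G" "B = stab #> b"
      unfolding S.coset_graph_gedges by blast
    then have "ends a = ends b" using eq S.incident_vertices_coset_graph by simp
    then show "A = B"
      using ab ends_eq_iff rcos_eq_iff[OF stab_subgroup] by metis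
  qed
  moreover have "incident_vertices (coset_graph G H stab) ` gedges (coset_graph G H stab) = end_pairs"
    unfolding S.coset_graph_gedges end_pairs_def using S.incident_vertices_coset_graph by blast
  ultimately show ?thesis
    using graph_iso_membership_graph S.coset_graph_gverts by metis
qed

end

lemma coset_edge_of_index_two:
  assumes "group G" "subgroup H G" "subgroup J G" "sindex G J (H \<inter> J) = 2" "g \<in> J - H"
  shows "coset_edge G H g"
proof -
  interpret group G by fact
  have "g \<otimes>\<^bsub>G\<^esub> g \<in> H \<inter> J"
    using index_two_square_mem[OF subgroups_Inter_pair[OF assms(2,3)] assms(3) _ _] assms(4,5)
    by (auto simp: sindex_def)
  then show ?thesis
    using assms subgroup.mem_carrier[OF assms(3)]
    by (intro coset_edge.intro coset_edge_axioms.intro) auto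
qed

theorem theorem1p2:
  fixes G :: "('a, 'b) monoid_scheme" and H J L :: "'a set" and g :: 'a
  assumes "group G" and "subgroup H G" and "subgroup J G"
    and "H \<noteq> carrier G"
    and "sindex G J (H \<inter> J) = 2"
    and "finite (rcosets\<^bsub>G\<lparr>carrier := H\<rparr>\<^esub> (H \<inter> J))"
    and "core_free G (H \<inter> J)"
    and "g \<in> J - (H \<inter> J)"
    and "L = (H \<inter> conj_set G H g) <#>\<^bsub>G\<^esub> generate G {g}"
  shows "subgroup L G \<and> J \<subseteq> L
    \<and> edge_multiplicity (coset_graph G H J) (sindex G L J)
    \<and> graph_iso (base_graph (coset_graph G H J)) (coset_graph G H L)
    \<and> graph_iso (coset_graph G H L) (simp_coset_graph G H ((H #>\<^bsub>G\<^esub> g) <#>\<^bsub>G\<^esub> H))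
    \<and> (simple_graph (coset_graph G H J) \<longleftrightarrow> J = L)
    \<and> (J = L \<longrightarrow> graph_iso (coset_graph G H J) (simp_coset_graph G H ((H #>\<^bsub>G\<^esub> g) <#>\<^bsub>G\<^esub> H)))"
proof -
  have gJ: "g \<in> J" and gH: "g \<in> J - H" using assms(8) by auto
  interpret coset_edge G H g
    using coset_edge_of_index_two[OF assms(1-3,5) gH] .
  have L: "L = stab" using stab_eq assms(9) by simp
  interpret J: coset_edge_subgroup G H g J
    using assms(3) gJ subset_stab_of_index_two[OF assms(3) gJ assms(5)]
    by (intro coset_edge_subgroup.intro coset_edge_subgroup_axioms.intro coset_edge_axioms)
  have "graph_iso (coset_graph G H L) (simp_coset_graph G H ((H #>\<^bsub>G\<^esub> g) <#>\<^bsub>G\<^esub> H))"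
    unfolding L simp_coset_graph_eq by (rule coset_graph_stab_iso)
  moreover have "graph_iso (base_graph (coset_graph G H J)) (coset_graph G H L)"
    unfolding J.base_graph_coset_graph L by (rule graph_iso_sym[OF coset_graph_stab_iso])
  ultimately show ?thesis
    using L stab_subgroup J.M_subset_stab J.coset_graph_edge_multiplicity J.simple_coset_graph_iff
    by auto
qed

end
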